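(* Let $u$ be implemented by a network of depth $\mathcal D$ and width $\mathcal W$ with activations in $\{\mathrm{ReLU}^2,\mathrm{ReLU}^3\}$ (respectively in $\{\mathrm{ReLU}^3\}$). Then for each $i=1,\dots,d$, the partial derivative $D_iu$ is implemented by a network of depth $\mathcal D+2$ and width at most $(\mathcal D+2)\mathcal W$ with activations in $\{\mathrm{ReLU},\mathrm{ReLU}^2,\mathrm{ReLU}^3\}$ (respectively in $\{\mathrm{ReLU}^2,\mathrm{ReLU}^3\}$). Moreover, the networks implementing $D_1u,\dots,D_du$ can be chosen with the same architecture.
   Context: $\mathrm{ReLU}^k(x)=(\max\{x,0\})^k$ for $k\ge1$. A function $u:\mathbb R^d\to\mathbb R$ is implemented by a network of depth $\mathcal D$ and width $\mathcal W$ with activations in $\Phi$ if there are $n_0=d,n_1,\dots,n_{\mathcal D}=1$ with $\max_\ell n_\ell\le\mathcal W$, $A_\ell\in\mathbb R^{n_\ell\times n_{\ell-1}}$, $b_\ell\in\mathbb R^{n_\ell}$, such that $f_0=x$, $(f_\ell)_q=\rho^{(\ell)}_q((A_\ell f_{\ell-1}+b_\ell)_q)$ for $\ell=1,\dots,\mathcal D-1$ with each $\rho^{(\ell)}_q\in\Phi$, and $u=A_{\mathcal D}f_{\mathcal D-1}+b_{\mathcal D}$. "Same architecture" means the same depth, layer sizes and assignment of activation functions to units (only the weights differ). *)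

theory Defs
  imports Complex_Main
begin

definition relu_pow :: "nat \<Rightarrow> real \<Rightarrow> real" where
  "relu_pow k x = (max x 0) ^ k"

text \<open>A network is given by layer sizes ns = [n_0,...,n_D], weights A l q j (layer l, row q, column j),
  biases b l q, and activation assignment act l q (exponent of ReLU used at unit q of layer l).
  Vectors are functions nat => real, only the first n_l entries being relevant.
  The input x : nat => real is a point of R^d via its first d coordinates.\<close>
fun net_layer :: "nat list \<Rightarrow> (nat \<Rightarrow> nat \<Rightarrow> nat \<Rightarrow> real) \<Rightarrow> (nat \<Rightarrow> nat \<Rightarrow> real)
    \<Rightarrow> (nat \<Rightarrow> nat \<Rightarrow> nat) \<Rightarrow> (nat \<Rightarrow> real) \<Rightarrow> nat \<Rightarrow> (nat \<Rightarrow> real)" where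
  "net_layer ns A b act x 0 = x"
| "net_layer ns A b act x (Suc l) =
     (\<lambda>q. relu_pow (act (Suc l) q)
            ((\<Sum>j<ns ! l. A (Suc l) q j * net_layer ns A b act x l j) + b (Suc l) q))"

definition net_out :: "nat list \<Rightarrow> (nat \<Rightarrow> nat \<Rightarrow> nat \<Rightarrow> real) \<Rightarrow> (nat \<Rightarrow> nat \<Rightarrow> real)
    \<Rightarrow> (nat \<Rightarrow> nat \<Rightarrow> nat) \<Rightarrow> (nat \<Rightarrow> real) \<Rightarrow> real" where
  "net_out ns A b act x =
     (let D = length ns - 1 in
       (\<Sum>j<ns ! (D - 1). A D 0 j * net_layer ns A b act x (D - 1) j) + b D 0)"

definition net_arch :: "nat list \<Rightarrow> (nat \<Rightarrow> nat \<Rightarrow> nat) \<Rightarrow> nat set \<Rightarrow> nat \<Rightarrow> nat \<Rightarrow> nat \<Rightarrow> bool" where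
  "net_arch ns act \<Phi> d D W \<longleftrightarrow>
     1 \<le> D \<and> length ns = D + 1 \<and> ns ! 0 = d \<and> ns ! D = 1 \<and>
     (\<forall>l\<le>D. ns ! l \<le> W) \<and>
     (\<forall>l. 1 \<le> l \<and> l < D \<longrightarrow> (\<forall>q < ns ! l. act l q \<in> \<Phi>))"

definition implements :: "nat set \<Rightarrow> nat \<Rightarrow> nat \<Rightarrow> nat \<Rightarrow> ((nat \<Rightarrow> real) \<Rightarrow> real) \<Rightarrow> bool" where
  "implements \<Phi> d D W u \<longleftrightarrow>
     (\<exists>ns A b act. net_arch ns act \<Phi> d D W \<and> (\<forall>x. u x = net_out ns A b act x))"

end

theory Submission
  imports Defs
begin

(* Forward-mode differentiation: with z_l = A_l f_(l-1) + b_l, the partial derivatives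
   t_l = D_i f_l satisfy t_l = k ReLU^(k-1)(z_l) (A_l t_(l-1)), and D_i u = A_D t_(D-1).
   ReLU^(k-1) is again an admissible activation, so the only remaining nonlinearity is the
   product a c of two quantities that are affine in the previous layer; four ReLU^2 units
   compute it exactly, since 4 a c = (a + c)^2 - (a - c)^2 and w^2 = ReLU^2(w) + ReLU^2(-w).
   Each product costs one layer, so t_(l-1) is affine in layer l of the new network and D_i u
   is affine in layer D; one more product, with the constant 1, carries it to depth D + 2.
   A layer consists of at most six blocks of at most W units, all six only when D >= 4. *)

lemma relu_pow_has_real_derivative_at_0:
  assumes "2 \<le> k"
  shows "(relu_pow k has_real_derivative 0) (at 0)"
proof -
  have bound: "norm (relu_pow k h / h) \<le> norm (\<bar>h\<bar> ^ (k - 1)) * 1" for h :: real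
  proof (cases "h > 0")
    case True
    then have "relu_pow k h / h = h ^ (k - 1)"
      using assms by (simp add: relu_pow_def power_eq_if)
    then show ?thesis
      using True by simp
  next
    case False
    then show ?thesis
      using assms by (simp add: relu_pow_def max_def power_0_left)
  qed
  have "(\<lambda>h::real. \<bar>h\<bar> ^ (k - 1)) \<midarrow>0\<rightarrow> 0"
    using assms by (auto intro!: tendsto_eq_intros)
  then have "(\<lambda>h. relu_pow k h / h) \<midarrow>0\<rightarrow> 0"
    by (rule tendsto_0_le[where K = 1]) (intro always_eventually allI bound)
  then show ?thesis
    using assms by (simp add: DERIV_def relu_pow_def power_0_left)
qed

lemma relu_pow_has_real_derivative:
  assumes k: "2 \<le> k"
  shows "(relu_pow k has_real_derivative real k * relu_pow (k - 1) y) (at y)"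
proof -
  consider "y > 0" | "y < 0" | "y = 0"
    by linarith
  then show ?thesis
  proof cases
    case 1
    have ev: "\<forall>\<^sub>F z in nhds y. relu_pow k z = z ^ k"
      using eventually_nhds_in_open[of "{0<..}" y] 1
      by (auto elim!: eventually_mono simp: relu_pow_def)
    have "((\<lambda>z. z ^ k) has_real_derivative real k * y ^ (k - 1)) (at y)"
      using DERIV_power[OF DERIV_ident, of k y UNIV] by simp
    moreover have "relu_pow (k - 1) y = y ^ (k - 1)"
      using 1 by (simp add: relu_pow_def)
    ultimately show ?thesis
      using DERIV_cong_ev[OF refl ev refl] by simp
  next
    case 2
    have ev: "\<forall>\<^sub>F z in nhds y. relu_pow k z = 0"
      using eventually_nhds_in_open[of "{..<0}" y] 2 k
      by (auto elim!: eventually_mono simp: relu_pow_def)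
    moreover have "relu_pow (k - 1) y = 0"
      using 2 k by (simp add: relu_pow_def)
    ultimately show ?thesis
      using DERIV_cong_ev[OF refl ev, of 0 0] DERIV_const[of 0 "at y"] by simp
  next
    case 3
    then show ?thesis
      using k relu_pow_has_real_derivative_at_0 by (simp add: relu_pow_def power_0_left)
  qed
qed

definition pm :: "bool \<Rightarrow> real" where
  "pm s = (if s then 1 else -1)"

lemma relu_pow_2_even: "relu_pow 2 w + relu_pow 2 (- w) = w\<^sup>2"
  by (simp add: relu_pow_def max_def power2_eq_square)

lemma relu_pow_2_polarization:
  "(\<Sum>s\<in>UNIV. \<Sum>t\<in>UNIV. pm t * relu_pow 2 (pm s * (a + pm t * c))) = 4 * a * c"
proof -
  have "(\<Sum>s\<in>UNIV. \<Sum>t\<in>UNIV. pm t * relu_pow 2 (pm s * (a + pm t * c))) = (a + c)\<^sup>2 - (a - c)\<^sup>2"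
    using relu_pow_2_even[of "a + c"] relu_pow_2_even[of "a - c"]
    by (simp add: UNIV_bool pm_def algebra_simps)
  then show ?thesis
    by (simp add: power2_eq_square algebra_simps)
qed

datatype node = Fwd nat | Slope nat | Square nat bool bool

definition node_list :: "nat \<Rightarrow> nat \<Rightarrow> nat \<Rightarrow> node list" where
  "node_list a b c = map Fwd [0..<a] @ map Slope [0..<b]
     @ [Square j s t. j \<leftarrow> [0..<c], s \<leftarrow> [False, True], t \<leftarrow> [False, True]]"

lemma length_node_list: "length (node_list a b c) = a + b + 4 * c"
  by (simp add: node_list_def length_concat comp_def sum_list_triv)

lemma set_node_list:
  "k \<in> set (node_list a b c) \<longleftrightarrow> (case k of Fwd j \<Rightarrow> j < a | Slope j \<Rightarrow> j < b | Square j s t \<Rightarrow> j < c)"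
  by (cases k) (auto simp: node_list_def)

lemma sum_node_list:
  "(\<Sum>p<length (node_list a b c). f (node_list a b c ! p)) =
     (\<Sum>j<a. f (Fwd j)) + (\<Sum>j<b. f (Slope j)) + (\<Sum>j<c. \<Sum>s\<in>UNIV. \<Sum>t\<in>UNIV. f (Square j s t))"
proof -
  have "(\<Sum>p<length xs. f (xs ! p)) = sum_list (map f xs)" for xs
    by (simp add: sum_list_sum_nth atLeast0LessThan)
  moreover have "sum_list (map f (concat xss)) = sum_list (map (\<lambda>xs. sum_list (map f xs)) xss)"
    for xss
    by (induction xss) auto
  ultimately show ?thesis
    unfolding node_list_def
    by (simp only:)
      (simp add: UNIV_bool interv_sum_list_conv_sum_set_nat atLeast0LessThan comp_def add.assoc)
qed

locale relu_net =
  fixes ns :: "nat list" and A :: "nat \<Rightarrow> nat \<Rightarrow> nat \<Rightarrow> real" and b :: "nat \<Rightarrow> nat \<Rightarrow> real"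
    and act :: "nat \<Rightarrow> nat \<Rightarrow> nat" and D :: nat
  assumes depth_pos: "1 \<le> D" and length_ns: "length ns = D + 1"
    and act_ge_2: "\<And>l q. 1 \<le> l \<Longrightarrow> l < D \<Longrightarrow> q < ns ! l \<Longrightarrow> 2 \<le> act l q"
begin

abbreviation layer :: "(nat \<Rightarrow> real) \<Rightarrow> nat \<Rightarrow> nat \<Rightarrow> real" where
  "layer \<equiv> net_layer ns A b act"

definition preact :: "nat \<Rightarrow> nat \<Rightarrow> (nat \<Rightarrow> real) \<Rightarrow> real" where
  "preact l q x = (\<Sum>j<ns ! (l - 1). A l q j * layer x (l - 1) j) + b l q"

lemma layer_Suc: "layer x (Suc l) q = relu_pow (act (Suc l) q) (preact (Suc l) q x)"
  by (simp add: preact_def)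

(* Layer m of the derivative network keeps the original units of layer m while a later slope
   still needs them, the slopes ReLU^(k-1)(z) of layer m, and four squares for each product
   formed at layer m: the tangents of layer m - 1 for 2 <= m <= D, and D_i u at layer D + 1. *)
definition n_fwd :: "nat \<Rightarrow> nat" where
  "n_fwd m = (if m = 0 \<or> m + 2 \<le> D then ns ! m else 0)"

definition n_slope :: "nat \<Rightarrow> nat" where
  "n_slope m = (if 1 \<le> m \<and> m < D then ns ! m else 0)"

definition n_prod :: "nat \<Rightarrow> nat" where
  "n_prod m = (if 2 \<le> m \<and> m \<le> D then ns ! (m - 1) else if m = D + 1 \<and> 2 \<le> D then 1 else 0)"

definition nodes :: "nat \<Rightarrow> node list" where
  "nodes m = node_list (n_fwd m) (n_slope m) (n_prod m)"

definition node_act :: "nat \<Rightarrow> node \<Rightarrow> nat" where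
  "node_act m k = (case k of Fwd j \<Rightarrow> act m j | Slope j \<Rightarrow> act m j - 1 | Square _ _ _ \<Rightarrow> 2)"

definition deriv_dims :: "nat list" where
  "deriv_dims = map (\<lambda>m. length (nodes m)) [0..<D + 2] @ [1]"

definition deriv_act :: "nat \<Rightarrow> nat \<Rightarrow> nat" where
  "deriv_act m q = node_act m (nodes m ! q)"

lemma nth_deriv_dims:
  "m \<le> D + 1 \<Longrightarrow> deriv_dims ! m = length (nodes m)" "deriv_dims ! (D + 2) = 1"
  by (simp_all add: deriv_dims_def nth_append del: upt_Suc)

lemma length_nodes_le:
  assumes W: "\<And>l. l \<le> D \<Longrightarrow> ns ! l \<le> W" and "ns ! D = 1" and "m \<le> D + 1"
  shows "length (nodes m) \<le> (D + 2) * W"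
proof -
  let ?c = "of_bool (n_fwd m \<noteq> 0) + of_bool (n_slope m \<noteq> 0) + 4 * of_bool (n_prod m \<noteq> 0) :: nat"
  have "n_fwd m \<le> W" "n_slope m \<le> W" "n_prod m \<le> W"
    using W[of m] W[of "m - 1"] W[of D] assms(2,3) by (auto simp: n_fwd_def n_slope_def n_prod_def)
  then have "length (nodes m) \<le> ?c * W"
    by (simp add: nodes_def length_node_list algebra_simps)
  moreover have "?c \<le> D + 2"
    by (auto simp: n_fwd_def n_slope_def n_prod_def)
  ultimately show ?thesis
    using mult_le_mono1 order_trans by blast
qed

lemma node_act_mem:
  assumes "\<And>l q. 1 \<le> l \<Longrightarrow> l < D \<Longrightarrow> q < ns ! l \<Longrightarrow> act l q \<in> \<Phi>"
    and "1 \<le> m" and "k \<in> set (nodes m)"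
  shows "node_act m k \<in> \<Phi> \<union> (\<lambda>k. k - 1) ` \<Phi> \<union> {2}"
  using assms
  by (cases k)
    (auto simp: node_act_def nodes_def set_node_list n_fwd_def n_slope_def split: if_splits)

lemma net_arch_deriv:
  assumes "net_arch ns act \<Phi> d D W"
  shows "net_arch deriv_dims deriv_act (\<Phi> \<union> (\<lambda>k. k - 1) ` \<Phi> \<union> {2}) d (D + 2) ((D + 2) * W)"
  unfolding net_arch_def
proof (intro conjI allI impI)
  have W: "\<And>l. l \<le> D \<Longrightarrow> ns ! l \<le> W" and out: "ns ! D = 1" and input: "ns ! 0 = d"
    using assms by (auto simp: net_arch_def)
  show "length deriv_dims = D + 2 + 1"
    by (simp add: deriv_dims_def)
  show "deriv_dims ! 0 = d" "deriv_dims ! (D + 2) = 1"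
    using input nth_deriv_dims(1)[of 0] nth_deriv_dims(2)
    by (simp_all add: nodes_def length_node_list n_fwd_def n_slope_def n_prod_def)
  show "deriv_dims ! l \<le> (D + 2) * W" if "l \<le> D + 2" for l
    using that length_nodes_le[OF W out, of l] nth_deriv_dims W[of D] out
    by (cases "l = D + 2") auto
  show "deriv_act l q \<in> \<Phi> \<union> (\<lambda>k. k - 1) ` \<Phi> \<union> {2}"
    if "1 \<le> l \<and> l < D + 2" and "q < deriv_dims ! l" for l q
    using that assms nth_deriv_dims(1)[of l] unfolding deriv_act_def net_arch_def
    by (intro node_act_mem) auto
qed simp

end

locale relu_net_partial = relu_net + fixes i :: nat
begin

primrec tangent :: "nat \<Rightarrow> nat \<Rightarrow> (nat \<Rightarrow> real) \<Rightarrow> real" where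
  "tangent 0 q x = (if q = i then 1 else 0)"
| "tangent (Suc l) q x = real (act (Suc l) q) * relu_pow (act (Suc l) q - 1) (preact (Suc l) q x)
      * (\<Sum>j<ns ! l. A (Suc l) q j * tangent l j x)"

definition partial :: "(nat \<Rightarrow> real) \<Rightarrow> real" where
  "partial x = (\<Sum>j<ns ! (D - 1). A D 0 j * tangent (D - 1) j x)"

lemma layer_has_derivative:
  "l < D \<Longrightarrow> l = 0 \<or> q < ns ! l \<Longrightarrow>
    ((\<lambda>t. layer (x(i := t)) l q) has_real_derivative tangent l q x) (at (x i))"
proof (induction l arbitrary: q)
  case 0
  show ?case
    by (cases "q = i") auto
next
  case (Suc l)
  have preact_deriv: "((\<lambda>t. preact (Suc l) q (x(i := t))) has_real_derivative
      (\<Sum>j<ns ! l. A (Suc l) q j * tangent l j x)) (at (x i))"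
    unfolding preact_def using Suc.prems
    by (auto intro!: derivative_eq_intros Suc.IH simp: mult.commute)
  have "2 \<le> act (Suc l) q"
    using act_ge_2 Suc.prems by simp
  from DERIV_chain2[OF relu_pow_has_real_derivative[OF this] preact_deriv]
  show ?case
    by (simp only: layer_Suc tangent.simps fun_upd_triv)
qed

lemma net_out_has_partial:
  "((\<lambda>t. net_out ns A b act (x(i := t))) has_real_derivative partial x) (at (x i))"
  unfolding net_out_def partial_def length_ns Let_def using depth_pos
  by (auto intro!: derivative_eq_intros layer_has_derivative simp: mult.commute)

definition left_val :: "nat \<Rightarrow> nat \<Rightarrow> (nat \<Rightarrow> real) \<Rightarrow> real" where
  "left_val m j x = (if m \<le> D
     then real (act (m - 1) j) * relu_pow (act (m - 1) j - 1) (preact (m - 1) j x) else partial x)"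

definition right_val :: "nat \<Rightarrow> nat \<Rightarrow> (nat \<Rightarrow> real) \<Rightarrow> real" where
  "right_val m j x = (if m \<le> D then \<Sum>j'<ns ! (m - 2). A (m - 1) j j' * tangent (m - 2) j' x else 1)"

definition node_val :: "nat \<Rightarrow> node \<Rightarrow> (nat \<Rightarrow> real) \<Rightarrow> real" where
  "node_val m k x = (case k of
     Fwd j \<Rightarrow> layer x m j
   | Slope j \<Rightarrow> relu_pow (act m j - 1) (preact m j x)
   | Square j s t \<Rightarrow> relu_pow 2 (pm s * (left_val m j x + pm t * right_val m j x)))"

lemma left_times_right_val:
  "2 \<le> m \<Longrightarrow> m \<le> D \<Longrightarrow> left_val m j x * right_val m j x = tangent (m - 1) j x"
  "left_val (D + 1) j x * right_val (D + 1) j x = partial x"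
  by (auto simp: left_val_def right_val_def numeral_2_eq_2 le_iff_add)

(* None stands for the constant input 1, whose weight is the bias. *)
definition affine_eval :: "nat \<Rightarrow> (node option \<Rightarrow> real) \<Rightarrow> (nat \<Rightarrow> real) \<Rightarrow> real" where
  "affine_eval m w x =
     (\<Sum>p<length (nodes m). w (Some (nodes m ! p)) * node_val m (nodes m ! p) x) + w None"

lemma affine_eval_blocks:
  "affine_eval m w x = (\<Sum>j<n_fwd m. w (Some (Fwd j)) * node_val m (Fwd j) x)
     + (\<Sum>j<n_slope m. w (Some (Slope j)) * node_val m (Slope j) x)
     + (\<Sum>j<n_prod m. \<Sum>s\<in>UNIV. \<Sum>t\<in>UNIV. w (Some (Square j s t)) * node_val m (Square j s t) x)
     + w None"
  using sum_node_list[of "\<lambda>k. w (Some k) * node_val m k x"] by (simp add: affine_eval_def nodes_def)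

lemma affine_eval_add: "affine_eval m (\<lambda>k. v k + w k) x = affine_eval m v x + affine_eval m w x"
  by (simp add: affine_eval_def algebra_simps sum.distrib)

lemma affine_eval_scale: "affine_eval m (\<lambda>k. c * w k) x = c * affine_eval m w x"
  by (simp add: affine_eval_def algebra_simps sum_distrib_left)

lemma affine_eval_sum: "affine_eval m (\<lambda>k. \<Sum>j\<in>J. w j k) x = (\<Sum>j\<in>J. affine_eval m (w j) x)"
  by (simp add: affine_eval_def sum_distrib_right sum.distrib sum.swap[of _ J])

definition fwd_fun :: "nat \<Rightarrow> nat \<Rightarrow> node option \<Rightarrow> real" where
  "fwd_fun m j k = (case k of None \<Rightarrow> b m j | Some (Fwd j') \<Rightarrow> A m j j' | Some _ \<Rightarrow> 0)"

definition slope_fun :: "nat \<Rightarrow> nat \<Rightarrow> node option \<Rightarrow> real" where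
  "slope_fun m j k = (if k = Some (Slope j) then real (act m j) else 0)"

definition prod_fun :: "nat \<Rightarrow> node option \<Rightarrow> real" where
  "prod_fun j k = (case k of Some (Square j' s t) \<Rightarrow> if j' = j then pm t / 4 else 0 | _ \<Rightarrow> 0)"

definition tangent_fun :: "nat \<Rightarrow> nat \<Rightarrow> node option \<Rightarrow> real" where
  "tangent_fun g j = (if g = 0 then (\<lambda>k. if k = None \<and> j = i then 1 else 0) else prod_fun j)"

lemma affine_eval_fwd_fun:
  "n_fwd m = ns ! m \<Longrightarrow> affine_eval m (fwd_fun (Suc m) j) x = preact (Suc m) j x"
  by (simp add: affine_eval_blocks fwd_fun_def node_val_def preact_def)

lemma affine_eval_slope_fun:
  "j < n_slope m \<Longrightarrow> affine_eval m (slope_fun m j) x = real (act m j) * node_val m (Slope j) x"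
  by (simp add: affine_eval_blocks slope_fun_def if_distrib[of "\<lambda>c. c * _"] cong: if_cong)

lemma affine_eval_prod_fun:
  assumes "j < n_prod m"
  shows "affine_eval m (prod_fun j) x = left_val m j x * right_val m j x"
proof -
  let ?sq = "\<lambda>s t. pm t * relu_pow 2 (pm s * (left_val m j x + pm t * right_val m j x)) / 4"
  have "(\<Sum>s\<in>UNIV. \<Sum>t\<in>UNIV. prod_fun j (Some (Square j' s t)) * node_val m (Square j' s t) x)
      = (if j' = j then \<Sum>s\<in>UNIV. \<Sum>t\<in>UNIV. ?sq s t else 0)" for j'
    by (cases "j' = j") (simp_all add: prod_fun_def node_val_def)
  then have "affine_eval m (prod_fun j) x =
      (\<Sum>j'<n_prod m. if j' = j then \<Sum>s\<in>UNIV. \<Sum>t\<in>UNIV. ?sq s t else 0)"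
    by (simp add: affine_eval_blocks prod_fun_def del: sum.delta)
  also have "\<dots> = (\<Sum>s\<in>UNIV. \<Sum>t\<in>UNIV. ?sq s t)"
    using assms by simp
  also have "\<dots> = left_val m j x * right_val m j x"
    using relu_pow_2_polarization by (simp add: sum_divide_distrib[symmetric])
  finally show ?thesis .
qed

lemma affine_eval_tangent_fun_0: "affine_eval m (tangent_fun 0 j) x = tangent 0 j x"
  by (simp add: tangent_fun_def affine_eval_blocks)

lemma affine_eval_tangent_fun:
  assumes "g < D" and "g = 0 \<or> j < ns ! g"
  shows "affine_eval (Suc g) (tangent_fun g j) x = tangent g j x"
proof (cases g)
  case 0
  then show ?thesis
    by (simp add: affine_eval_tangent_fun_0)
next
  case (Suc g')
  then have "j < n_prod (Suc g)"
    using assms by (simp add: n_prod_def)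
  then show ?thesis
    using assms Suc by (simp add: tangent_fun_def affine_eval_prod_fun left_times_right_val)
qed

definition partial_fun :: "node option \<Rightarrow> real" where
  "partial_fun = (\<lambda>k. \<Sum>j<ns ! (D - 1). A D 0 j * tangent_fun (D - 1) j k)"

lemma affine_eval_partial_fun:
  assumes "m = D \<or> D = 1"
  shows "affine_eval m partial_fun x = partial x"
proof -
  have "affine_eval m partial_fun x =
      (\<Sum>j<ns ! (D - 1). A D 0 j * affine_eval m (tangent_fun (D - 1) j) x)"
    by (simp add: partial_fun_def affine_eval_sum affine_eval_scale)
  also have "\<dots> = partial x"
    using assms depth_pos affine_eval_tangent_fun[of "D - 1"] affine_eval_tangent_fun_0
    by (auto simp: partial_def)
  finally show ?thesis .
qed

definition left_fun :: "nat \<Rightarrow> nat \<Rightarrow> node option \<Rightarrow> real" where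
  "left_fun m j = (if m \<le> D then slope_fun (m - 1) j else partial_fun)"

definition right_fun :: "nat \<Rightarrow> nat \<Rightarrow> node option \<Rightarrow> real" where
  "right_fun m j = (if m \<le> D then (\<lambda>k. \<Sum>j'<ns ! (m - 2). A (m - 1) j j' * tangent_fun (m - 2) j' k)
     else (\<lambda>k. if k = None then 1 else 0))"

lemma affine_eval_left_fun:
  "j < n_prod (Suc m) \<Longrightarrow> affine_eval m (left_fun (Suc m) j) x = left_val (Suc m) j x"
  by (auto simp: n_prod_def left_fun_def left_val_def affine_eval_slope_fun n_slope_def node_val_def
      affine_eval_partial_fun split: if_splits)

lemma affine_eval_right_fun:
  assumes "j < n_prod (Suc m)"
  shows "affine_eval m (right_fun (Suc m) j) x = right_val (Suc m) j x"
proof (cases "Suc m \<le> D")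
  case True
  then have "affine_eval m (right_fun (Suc m) j) x =
      (\<Sum>j'<ns ! (m - 1). A m j j' * affine_eval m (tangent_fun (m - 1) j') x)"
    by (simp add: right_fun_def affine_eval_sum affine_eval_scale)
  also have "\<dots> = right_val (Suc m) j x"
  proof -
    have "1 \<le> m"
      using True assms by (simp add: n_prod_def split: if_splits)
    then have "affine_eval m (tangent_fun (m - 1) j') x = tangent (m - 1) j' x"
      if "j' < ns ! (m - 1)" for j'
      using affine_eval_tangent_fun[of "m - 1" j'] True that by simp
    then show ?thesis
      using True by (simp add: right_val_def)
  qed
  finally show ?thesis .
next
  case False
  then show ?thesis
    by (simp add: right_fun_def right_val_def affine_eval_blocks)
qed

definition node_fun :: "nat \<Rightarrow> node \<Rightarrow> node option \<Rightarrow> real" where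
  "node_fun m k = (case k of
     Fwd j \<Rightarrow> fwd_fun m j
   | Slope j \<Rightarrow> fwd_fun m j
   | Square j s t \<Rightarrow> (\<lambda>k'. pm s * (left_fun m j k' + pm t * right_fun m j k')))"

lemma node_step:
  assumes "k \<in> set (nodes (Suc m))" and "m \<le> D"
  shows "relu_pow (node_act (Suc m) k) (affine_eval m (node_fun (Suc m) k) x)
    = node_val (Suc m) k x"
proof (cases k)
  case (Fwd j)
  then have "n_fwd m = ns ! m"
    using assms by (auto simp: nodes_def set_node_list n_fwd_def split: if_splits)
  then show ?thesis
    using Fwd by (simp add: node_fun_def node_act_def node_val_def affine_eval_fwd_fun preact_def)
next
  case (Slope j)
  then have "n_fwd m = ns ! m"
    using assms by (auto simp: nodes_def set_node_list n_fwd_def n_slope_def split: if_splits)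
  then show ?thesis
    using Slope by (simp add: node_fun_def node_act_def node_val_def affine_eval_fwd_fun)
next
  case (Square j s t)
  then have "j < n_prod (Suc m)"
    using assms by (simp add: nodes_def set_node_list)
  then show ?thesis
    using Square by (simp add: node_fun_def node_act_def node_val_def affine_eval_add
        affine_eval_scale affine_eval_left_fun affine_eval_right_fun)
qed

(* For D = 1 the derivative is constant and is put into the output bias. *)
definition out_fun :: "node option \<Rightarrow> real" where
  "out_fun = (if 2 \<le> D then prod_fun 0 else partial_fun)"

definition unit_fun :: "nat \<Rightarrow> nat \<Rightarrow> node option \<Rightarrow> real" where
  "unit_fun m q = (if m = D + 2 then out_fun else node_fun m (nodes m ! q))"

definition deriv_weights :: "nat \<Rightarrow> nat \<Rightarrow> nat \<Rightarrow> real" where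
  "deriv_weights m q p = unit_fun m q (Some (nodes (m - 1) ! p))"

definition deriv_biases :: "nat \<Rightarrow> nat \<Rightarrow> real" where
  "deriv_biases m q = unit_fun m q None"

lemma deriv_preact_eq_affine_eval:
  assumes "m \<le> D + 1"
    and "\<And>p. p < length (nodes m) \<Longrightarrow>
      net_layer deriv_dims deriv_weights deriv_biases deriv_act x m p = node_val m (nodes m ! p) x"
  shows "(\<Sum>p<deriv_dims ! m. deriv_weights (Suc m) q p
      * net_layer deriv_dims deriv_weights deriv_biases deriv_act x m p) + deriv_biases (Suc m) q
    = affine_eval m (unit_fun (Suc m) q) x"
  using assms by (simp add: nth_deriv_dims deriv_weights_def deriv_biases_def affine_eval_def)

lemma deriv_layer:
  "m \<le> D + 1 \<Longrightarrow> p < length (nodes m) \<Longrightarrow>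
    net_layer deriv_dims deriv_weights deriv_biases deriv_act x m p = node_val m (nodes m ! p) x"
proof (induction m arbitrary: p)
  case 0
  then show ?case
    by (simp add: nodes_def node_list_def length_node_list node_val_def n_slope_def n_prod_def
        nth_append)
next
  case (Suc m)
  have "net_layer deriv_dims deriv_weights deriv_biases deriv_act x (Suc m) p
      = relu_pow (deriv_act (Suc m) p) (affine_eval m (unit_fun (Suc m) p) x)"
    using Suc deriv_preact_eq_affine_eval[of m] by simp
  also have "\<dots> = relu_pow (node_act (Suc m) (nodes (Suc m) ! p))
      (affine_eval m (node_fun (Suc m) (nodes (Suc m) ! p)) x)"
    using Suc.prems by (simp add: deriv_act_def unit_fun_def)
  also have "\<dots> = node_val (Suc m) (nodes (Suc m) ! p) x"
    using Suc.prems by (intro node_step) auto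
  finally show ?case .
qed

lemma deriv_net_out: "net_out deriv_dims deriv_weights deriv_biases deriv_act x = partial x"
proof -
  have "net_out deriv_dims deriv_weights deriv_biases deriv_act x = affine_eval (D + 1) out_fun x"
    using deriv_preact_eq_affine_eval[of "D + 1"] deriv_layer[of "D + 1"]
    by (simp add: net_out_def deriv_dims_def unit_fun_def)
  also have "\<dots> = partial x"
    using depth_pos affine_eval_prod_fun[of 0 "D + 1"] left_times_right_val(2)[of 0 x]
    by (auto simp: out_fun_def n_prod_def affine_eval_partial_fun)
  finally show ?thesis .
qed

end

lemma net_arch_mono: "net_arch ns act \<Phi> d D W \<Longrightarrow> \<Phi> \<subseteq> \<Psi> \<Longrightarrow> net_arch ns act \<Psi> d D W"
  by (auto simp: net_arch_def)

theorem implements_partial_derivatives: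
  assumes "implements \<Phi> d D W u" and "\<And>k. k \<in> \<Phi> \<Longrightarrow> 2 \<le> k"
  shows "\<exists>ns act. net_arch ns act (\<Phi> \<union> (\<lambda>k. k - 1) ` \<Phi> \<union> {2}) d (D + 2) ((D + 2) * W) \<and>
           (\<forall>i. \<exists>A b. \<forall>x.
              ((\<lambda>t. u (x(i := t))) has_real_derivative net_out ns A b act x) (at (x i)))"
proof -
  obtain ns A b act where arch: "net_arch ns act \<Phi> d D W" and u: "\<And>x. u x = net_out ns A b act x"
    using assms(1) by (auto simp: implements_def)
  interpret relu_net ns A b act D
    using arch assms(2) by unfold_locales (auto simp: net_arch_def)
  have "\<exists>A' b'. \<forall>x.
      ((\<lambda>t. u (x(i := t))) has_real_derivative net_out deriv_dims A' b' deriv_act x) (at (x i))"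
    for i
  proof -
    interpret relu_net_partial ns A b act D i
      by unfold_locales
    show ?thesis
      using net_out_has_partial
      by (intro exI[of _ deriv_weights] exI[of _ deriv_biases]) (simp add: u deriv_net_out)
  qed
  then show ?thesis
    using net_arch_deriv[OF arch] by blast
qed

theorem mainTheorem11:
  fixes u :: "(nat \<Rightarrow> real) \<Rightarrow> real" and d D W :: nat and \<Phi> \<Psi> :: "nat set"
  assumes acts: "(\<Phi> = {2, 3} \<and> \<Psi> = {1, 2, 3}) \<or> (\<Phi> = {3} \<and> \<Psi> = {2, 3})"
    and impl: "implements \<Phi> d D W u"
  shows "\<exists>ns act. net_arch ns act \<Psi> d (D + 2) ((D + 2) * W) \<and>
           (\<forall>i<d. \<exists>A b. \<forall>x.
              ((\<lambda>t. u (x(i := t))) has_real_derivative net_out ns A b act x) (at (x i)))"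
proof -
  have "\<And>k. k \<in> \<Phi> \<Longrightarrow> 2 \<le> k" and "\<Phi> \<union> (\<lambda>k. k - 1) ` \<Phi> \<union> {2} \<subseteq> \<Psi>"
    using acts by auto
  then show ?thesis
    using implements_partial_derivatives[OF impl] net_arch_mono by meson
qed

end
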